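(* Consider the instance described in the context with any realization of $X_1,\dots,X_m$. For any allocation $\widehat{\mathcal{A}}$, if there exists a constant $K>0$ such that $$d_H\big(X_{[1:m/2]},\widehat X_{[1:m/2]}\big)>\frac m4-\frac{K\gamma\sqrt m}{2\epsilon}\quad\text{and}\quad\Big|\tfrac12\big(|\widehat A_\epsilon|-|\widehat B_\epsilon|\big)+V_\gamma\Big|\ge K\gamma\sqrt m,$$ then $\mathrm{Envy}(\widehat{\mathcal{A}})>0$.
   Context: Two agents $a,b$, $m$ items ($m$ a multiple of 4), additive utilities. Instance: binary $X_1,\dots,X_m$; for $i\le m/2$: if $X_i=1$ then $\mu^a_i=\frac12+\epsilon,\mu^b_i=\frac12-\epsilon$, if $X_i=0$ then $\mu^a_i=\frac12-\epsilon,\mu^b_i=\frac12+\epsilon$; for $i>m/2$: if $X_i=1$ then $\mu^a_i=\mu^b_i=\frac12+\gamma$, if $X_i=0$ then $\mu^a_i=\mu^b_i=\frac12-\gamma$; $\epsilon,\gamma\in(0,1/2]$. For an allocation $\widehat{\mathcal{A}}=(\widehat{\mathcal{A}}_a,\widehat{\mathcal{A}}_b)$ (partition of $[m]$): $\mathrm{Envy}_{a\to b}=\sum_{i\in\widehat{\mathcal{A}}_b}\mu^a_i-\sum_{i\in\widehat{\mathcal{A}}_a}\mu^a_i$, $\mathrm{Envy}_{b\to a}=\sum_{i\in\widehat{\mathcal{A}}_a}\mu^b_i-\sum_{i\in\widehat{\mathcal{A}}_b}\mu^b_i$, $\mathrm{Envy}=\max$ of the two. $\widehat X_i=1$ if $i\in\widehat{\mathcal{A}}_a$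 and $\widehat X_i=0$ otherwise; $\widehat A_\epsilon=\{i\le m/2:\widehat X_i=1\}$, $\widehat B_\epsilon=\{i\le m/2:\widehat X_i=0\}$; $S_i=1$ if $i\in\widehat{\mathcal{A}}_a$ and $S_i=-1$ otherwise; $V_\gamma=\sum_{i>m/2}S_i\mu^a_i$. $d_H$ is Hamming distance and $X_{[1:m/2]}=(X_1,\dots,X_{m/2})$. *)

theory Defs
  imports Complex_Main
begin

text \<open>Items are 1..m. X i = True encodes X_i = 1. An allocation is a pair of sets (Aa, Ab)
  partitioning {1..m}.\<close>

definition mu_a :: "nat \<Rightarrow> real \<Rightarrow> real \<Rightarrow> (nat \<Rightarrow> bool) \<Rightarrow> nat \<Rightarrow> real" where
  "mu_a m eps gam X i =
     (if i \<le> m div 2 then (if X i then 1/2 + eps else 1/2 - eps)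
      else (if X i then 1/2 + gam else 1/2 - gam))"

definition mu_b :: "nat \<Rightarrow> real \<Rightarrow> real \<Rightarrow> (nat \<Rightarrow> bool) \<Rightarrow> nat \<Rightarrow> real" where
  "mu_b m eps gam X i =
     (if i \<le> m div 2 then (if X i then 1/2 - eps else 1/2 + eps)
      else (if X i then 1/2 + gam else 1/2 - gam))"

definition envy_ab :: "nat \<Rightarrow> real \<Rightarrow> real \<Rightarrow> (nat \<Rightarrow> bool) \<Rightarrow> nat set \<Rightarrow> nat set \<Rightarrow> real" where
  "envy_ab m eps gam X Aa Ab =
     (\<Sum>i\<in>Ab. mu_a m eps gam X i) - (\<Sum>i\<in>Aa. mu_a m eps gam X i)"

definition envy_ba :: "nat \<Rightarrow> real \<Rightarrow> real \<Rightarrow> (nat \<Rightarrow> bool) \<Rightarrow> nat set \<Rightarrow> nat set \<Rightarrow> real" where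
  "envy_ba m eps gam X Aa Ab =
     (\<Sum>i\<in>Aa. mu_b m eps gam X i) - (\<Sum>i\<in>Ab. mu_b m eps gam X i)"

definition envy :: "nat \<Rightarrow> real \<Rightarrow> real \<Rightarrow> (nat \<Rightarrow> bool) \<Rightarrow> nat set \<Rightarrow> nat set \<Rightarrow> real" where
  "envy m eps gam X Aa Ab = max (envy_ab m eps gam X Aa Ab) (envy_ba m eps gam X Aa Ab)"

definition Xhat :: "nat set \<Rightarrow> nat \<Rightarrow> bool" where
  "Xhat Aa i = (i \<in> Aa)"

definition Ahat_eps :: "nat \<Rightarrow> nat set \<Rightarrow> nat set" where
  "Ahat_eps m Aa = {i \<in> {1..m div 2}. Xhat Aa i}"

definition Bhat_eps :: "nat \<Rightarrow> nat set \<Rightarrow> nat set" where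
  "Bhat_eps m Aa = {i \<in> {1..m div 2}. \<not> Xhat Aa i}"

definition S_sign :: "nat set \<Rightarrow> nat \<Rightarrow> real" where
  "S_sign Aa i = (if i \<in> Aa then 1 else -1)"

definition V_gam :: "nat \<Rightarrow> real \<Rightarrow> real \<Rightarrow> (nat \<Rightarrow> bool) \<Rightarrow> nat set \<Rightarrow> real" where
  "V_gam m eps gam X Aa = (\<Sum>i\<in>{m div 2<..m}. S_sign Aa i * mu_a m eps gam X i)"

definition dH_half :: "nat \<Rightarrow> (nat \<Rightarrow> bool) \<Rightarrow> nat set \<Rightarrow> nat" where
  "dH_half m X Aa = card {i \<in> {1..m div 2}. X i \<noteq> Xhat Aa i}"

end

theory Submission
  imports Defs
begin

text \<open>Let S i = \<plusminus>1 record the allocation and s i = \<plusminus>1 record X i. On the first half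
  mu_a = 1/2 + eps s and mu_b = 1/2 - eps s, on the second half mu_a = mu_b. With
  T = (|Ahat| - |Bhat|)/2 + V and D = \<Sum> S i s i over the first half, which equals m/2 - 2 dH,
  the two envies are -T - eps D and T - eps D, so Envy = |T| - eps D exactly. The hypotheses
  say eps D < K gam \<surd>m \<le> |T|.\<close>

definition imbalance :: "nat \<Rightarrow> real \<Rightarrow> real \<Rightarrow> (nat \<Rightarrow> bool) \<Rightarrow> nat set \<Rightarrow> real" where
  "imbalance m eps gam X Aa =
     (1/2) * (real (card (Ahat_eps m Aa)) - real (card (Bhat_eps m Aa))) + V_gam m eps gam X Aa"

lemma sum_S_sign_partition:
  assumes "Aa \<union> Ab = U" "Aa \<inter> Ab = {}" "finite U"
  shows "(\<Sum>i\<in>U. S_sign Aa i * f i) = (\<Sum>i\<in>Aa. f i) - (\<Sum>i\<in>Ab. f i)"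
proof -
  have "finite Aa" "finite Ab" using assms by auto
  then have "(\<Sum>i\<in>U. S_sign Aa i * f i) = (\<Sum>i\<in>Aa. S_sign Aa i * f i) + (\<Sum>i\<in>Ab. S_sign Aa i * f i)"
    using assms by (metis sum.union_disjoint)
  also have "(\<Sum>i\<in>Aa. S_sign Aa i * f i) = (\<Sum>i\<in>Aa. f i)"
    by (rule sum.cong) (auto simp: S_sign_def)
  also have "(\<Sum>i\<in>Ab. S_sign Aa i * f i) = - (\<Sum>i\<in>Ab. f i)"
    using assms(2) by (auto simp: S_sign_def sum_negf[symmetric] intro!: sum.cong)
  finally show ?thesis by simp
qed

lemma sum_S_sign_first_half:
  "(\<Sum>i\<in>{1..m div 2}. S_sign Aa i) = real (card (Ahat_eps m Aa)) - real (card (Bhat_eps m Aa))"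
proof -
  have "(\<Sum>i\<in>{1..m div 2}. S_sign Aa i)
      = (\<Sum>i\<in>{1..m div 2}. (if i \<in> Aa then 1 else 0) - (if i \<notin> Aa then 1 else 0))"
    by (rule sum.cong) (auto simp: S_sign_def)
  then show ?thesis
    by (simp add: sum_subtractf sum.inter_filter[symmetric] Ahat_eps_def Bhat_eps_def Xhat_def)
qed

lemma sum_S_sign_agreement_first_half:
  "(\<Sum>i\<in>{1..m div 2}. S_sign Aa i * (if X i then 1 else -1))
     = real (m div 2) - 2 * real (dH_half m X Aa)"
proof -
  have "(\<Sum>i\<in>{1..m div 2}. S_sign Aa i * (if X i then 1 else -1))
      = (\<Sum>i\<in>{1..m div 2}. 1 - 2 * (if X i \<noteq> Xhat Aa i then 1 else 0))"
    by (rule sum.cong) (auto simp: S_sign_def Xhat_def)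
  then show ?thesis
    by (simp add: sum_subtractf sum_distrib_left[symmetric] sum.inter_filter[symmetric] dH_half_def)
qed

lemma sum_split_halves:
  fixes m :: nat
  shows "(\<Sum>i\<in>{1..m}. g i) = (\<Sum>i\<in>{1..m div 2}. g i) + (\<Sum>i\<in>{m div 2<..m}. g i)"
proof -
  have "{1..m} = {1..m div 2} \<union> {m div 2<..m}" by auto
  then show ?thesis by (simp only:) (rule sum.union_disjoint; auto)
qed

lemma sum_S_sign_mu_a:
  "(\<Sum>i\<in>{1..m}. S_sign Aa i * mu_a m eps gam X i)
     = imbalance m eps gam X Aa + eps * (real (m div 2) - 2 * real (dH_half m X Aa))"
proof -
  have "(\<Sum>i\<in>{1..m div 2}. S_sign Aa i * mu_a m eps gam X i)
      = (\<Sum>i\<in>{1..m div 2}. (1/2) * S_sign Aa i + eps * (S_sign Aa i * (if X i then 1 else -1)))"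
    by (rule sum.cong) (auto simp: mu_a_def algebra_simps)
  also have "\<dots> = (1/2) * (\<Sum>i\<in>{1..m div 2}. S_sign Aa i)
      + eps * (\<Sum>i\<in>{1..m div 2}. S_sign Aa i * (if X i then 1 else -1))"
    by (simp only: sum.distrib sum_distrib_left)
  finally show ?thesis
    unfolding sum_split_halves[of _ m] imbalance_def V_gam_def
      sum_S_sign_first_half sum_S_sign_agreement_first_half by simp
qed

lemma sum_S_sign_mu_b:
  "(\<Sum>i\<in>{1..m}. S_sign Aa i * mu_b m eps gam X i)
     = imbalance m eps gam X Aa - eps * (real (m div 2) - 2 * real (dH_half m X Aa))"
proof -
  have "(\<Sum>i\<in>{1..m div 2}. S_sign Aa i * mu_b m eps gam X i)
      = (\<Sum>i\<in>{1..m div 2}. (1/2) * S_sign Aa i - eps * (S_sign Aa i * (if X i then 1 else -1)))"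
    by (rule sum.cong) (auto simp: mu_b_def algebra_simps)
  also have "\<dots> = (1/2) * (\<Sum>i\<in>{1..m div 2}. S_sign Aa i)
      - eps * (\<Sum>i\<in>{1..m div 2}. S_sign Aa i * (if X i then 1 else -1))"
    by (simp only: sum_subtractf sum_distrib_left)
  moreover have "(\<Sum>i\<in>{m div 2<..m}. S_sign Aa i * mu_b m eps gam X i) = V_gam m eps gam X Aa"
    unfolding V_gam_def by (rule sum.cong) (auto simp: mu_a_def mu_b_def)
  ultimately show ?thesis
    unfolding sum_split_halves[of _ m] imbalance_def
      sum_S_sign_first_half sum_S_sign_agreement_first_half by simp
qed

lemma envy_eq_abs_imbalance:
  assumes "Aa \<union> Ab = {1..m}" "Aa \<inter> Ab = {}"
  shows "envy m eps gam X Aa Ab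
           = \<bar>imbalance m eps gam X Aa\<bar> - eps * (real (m div 2) - 2 * real (dH_half m X Aa))"
proof -
  have "envy_ab m eps gam X Aa Ab = - (\<Sum>i\<in>{1..m}. S_sign Aa i * mu_a m eps gam X i)"
    "envy_ba m eps gam X Aa Ab = (\<Sum>i\<in>{1..m}. S_sign Aa i * mu_b m eps gam X i)"
    unfolding envy_ab_def envy_ba_def using sum_S_sign_partition[OF assms] by simp_all
  then show ?thesis
    unfolding envy_def sum_S_sign_mu_a sum_S_sign_mu_b by (simp add: max_def abs_if)
qed

theorem lemma23:
  fixes m :: nat and X :: "nat \<Rightarrow> bool" and eps gam :: real and Aa Ab :: "nat set"
  assumes "4 dvd m"
    and "0 < eps" and "eps \<le> 1/2" and "0 < gam" and "gam \<le> 1/2"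
    and "Aa \<union> Ab = {1..m}" and "Aa \<inter> Ab = {}"
    and "\<exists>K::real. K > 0
           \<and> real (dH_half m X Aa) > real m / 4 - K * gam * sqrt (real m) / (2 * eps)
           \<and> \<bar>(1/2) * (real (card (Ahat_eps m Aa)) - real (card (Bhat_eps m Aa)))
                + V_gam m eps gam X Aa\<bar> \<ge> K * gam * sqrt (real m)"
  shows "envy m eps gam X Aa Ab > 0"
proof -
  obtain K :: real where
    dH: "real (dH_half m X Aa) > real m / 4 - K * gam * sqrt (real m) / (2 * eps)" and
    T: "\<bar>imbalance m eps gam X Aa\<bar> \<ge> K * gam * sqrt (real m)"
    using assms(8) unfolding imbalance_def by blast
  have "eps * (real (m div 2) - 2 * real (dH_half m X Aa))
      \<le> eps * (real m / 2 - 2 * real (dH_half m X Aa))"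
    using assms(2) by (intro mult_left_mono) linarith+
  also have "\<dots> < K * gam * sqrt (real m)"
    using dH assms(2) by (simp add: field_simps)
  finally have "eps * (real (m div 2) - 2 * real (dH_half m X Aa)) < K * gam * sqrt (real m)" .
  with T show ?thesis
    unfolding envy_eq_abs_imbalance[OF assms(6,7)] by linarith
qed

end
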